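(* Let $q\in X^*\setminus\{e\}$ and let $\lambda_q$ be the largest positive real root of $\mathfrak{p}_q(t):=t^{|q|}-\sum_{v\in\sqrt[*]{P_q}}t^{|q|-|v|}$. There exist a constant $c_{q,1}>0$ and an $\omega$-word $\xi\in P_q^\omega$ (i.e. $\xi$ is quasiperiodic with quasiperiod $q$) such that $f(\xi,n)\ge c_{q,1}\lambda_q^n$ for all $n\in\mathbb{N}$.
   Context: $X$ is a finite alphabet with $|X|\ge2$; $X^*$ the finite words (empty word $e$), $X^\omega$ the infinite words, $X^n$ the words of length $n$. $w\sqsubseteq\eta$ means $w$ is a prefix of $\eta$, $w\sqsubset\eta$ a proper prefix. For a language $L$, $L^\omega:=\{w_1w_2\cdots: w_i\in L\setminus\{e\}\}$. An $\omega$-word $\xi$ is quasiperiodic with quasiperiod $q$ if for every $j\in\mathbb{N}$ there is a prefix $u_j\sqsubseteq\xi$ with $j-|q|<|u_j|\le j$ and $u_j\cdot q\sqsubseteq\xi$; these are exactly the elements of $P_q^\omega$. $f(\xi,n):=|\mathrm{infix}(\xi)\cap X^n|$ is the number of distinct factors of $\xi$ of length $n$. $P_q:=\{v: e\sqsubset v\sqsubseteq q\sqsubset v\cdot q\}$, and $\sqrt[*]{P_q}:=P_q\setminus(P_q^2\cdot P_q^* )$. *)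

theory Defs
  imports Complex_Main "HOL-Library.Sublist"
begin

definition oprefix :: "'a list \<Rightarrow> (nat \<Rightarrow> 'a) \<Rightarrow> bool" where
  "oprefix w \<xi> \<longleftrightarrow> (\<forall>i<length w. w ! i = \<xi> i)"

definition omega_lang :: "'a list set \<Rightarrow> (nat \<Rightarrow> 'a) set" where
  "omega_lang L = {\<xi>. \<exists>ws :: nat \<Rightarrow> 'a list. (\<forall>i. ws i \<in> L - {[]}) \<and>
      (\<forall>n. oprefix (concat (map ws [0..<n])) \<xi>)}"

definition Pq :: "'a list \<Rightarrow> 'a list set" where
  "Pq q = {v. v \<noteq> [] \<and> prefix v q \<and> strict_prefix q (v @ q)}"

definition lang_pow_ge2 :: "'a list set \<Rightarrow> 'a list set" where
  "lang_pow_ge2 L = {concat vs | vs. length vs \<ge> 2 \<and> set vs \<subseteq> L}"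

definition root_Pq :: "'a list \<Rightarrow> 'a list set" where
  "root_Pq q = Pq q - lang_pow_ge2 (Pq q)"

definition char_poly_q :: "'a list \<Rightarrow> real \<Rightarrow> real" where
  "char_poly_q q t = t ^ length q - (\<Sum>v\<in>root_Pq q. t ^ (length q - length v))"

definition factors :: "(nat \<Rightarrow> 'a) \<Rightarrow> nat \<Rightarrow> 'a list set" where
  "factors \<xi> n = {map \<xi> [i..<i+n] | i. True}"

definition fcompl :: "(nat \<Rightarrow> 'a) \<Rightarrow> nat \<Rightarrow> nat" where
  "fcompl \<xi> n = card (factors \<xi> n)"

end

theory Submission imports Defs begin

(* Let R = root_Pq q be the primitive elements of P_q and lam > 0
   a root of the characteristic polynomial.  Then the Kraft sum of R at 1/lam equals 1.  For every
   n consider the minimal covers of n: lists of R-words whose concatenation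
   reaches length n only with its last word.  The Kraft identity propagates to
   the minimal covers, which forces at least lam^n of them.  Since R is a code
   (unique factorisation), distinct covers have distinct concatenations, and
   each concatenation is a factor of length n followed by at most |q| letters.
   Finally one omega-word in P_q^omega contains every minimal cover (for every
   n) as a factor: concatenate q and all covers, one after another.  Hence
   card (covers of n) <= f(xi,n) * #(words of length <= |q|), giving the bound. *)

section \<open>The primitive elements of P_q form a code\<close>

lemma Pq_word: "v \<in> Pq q \<Longrightarrow> v \<noteq> [] \<and> length v \<le> length q"
  by (simp add: Pq_def prefix_length_le)

lemma finite_Pq: "finite (Pq q)"
  by (rule finite_subset[of _ "set (prefixes q)"]) (auto simp: Pq_def)

lemma prefix_concat_Pq:
  assumes "set s \<subseteq> Pq q" shows "prefix q (concat s @ q)"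
  using assms
proof (induction s)
  case (Cons v s)
  then have "prefix q (concat s @ q)" by simp
  then have "prefix (v @ q) (v @ concat s @ q)" by simp
  moreover have "prefix q (v @ q)" using Cons.prems by (auto simp: Pq_def)
  ultimately show ?case by (metis append_assoc concat.simps(2) prefix_order.trans)
qed simp

text \<open>Two factorisations starting with different words u, w of P_q, |u| < |w|:
  then w = u w' with w' in P_q, so w is not primitive.\<close>
lemma Pq_overlap_not_root:
  assumes u: "u \<in> Pq q" and w: "w \<in> Pq q" and lt: "length u < length w"
    and eq: "u @ Y = w @ Z" and Y: "prefix q (Y @ q)" and Z: "prefix q (Z @ q)"
  shows "w \<notin> root_Pq q"
proof -
  define w' where "w' = drop (length u) w"
  have wu: "w = u @ w'"
    using eq lt unfolding w'_def by (metis append_eq_append_conv_if append_take_drop_id less_imp_le)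
  have Yeq: "Y = w' @ Z" using eq wu by simp
  have "prefix w q" using w by (simp add: Pq_def)
  then have short: "length w' < length q"
    using prefix_length_le lt u unfolding w'_def by (cases u) (fastforce simp: Pq_def)+
  have ne: "w' \<noteq> []" using wu lt by auto
  have "prefix w' q"
    using prefix_length_prefix[of w' "Y @ q" q] Yeq Y short by simp
  moreover have "prefix q (w' @ q)"
    using prefix_length_prefix[OF Y, of "w' @ q"] Yeq Z by simp
  ultimately have "w' \<in> Pq q" using ne by (auto simp: Pq_def strict_prefix_def)
  then have "w \<in> lang_pow_ge2 (Pq q)"
    unfolding lang_pow_ge2_def using u wu by (intro CollectI exI[of _ "[u, w']"]) auto
  then show ?thesis by (simp add: root_Pq_def)
qed

lemma root_Pq_subset: "root_Pq q \<subseteq> Pq q"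
  by (auto simp: root_Pq_def)

lemma root_Pq_finite: "finite (root_Pq q)"
  using root_Pq_subset finite_Pq by (rule finite_subset)

lemma root_Pq_word: "v \<in> root_Pq q \<Longrightarrow> v \<noteq> [] \<and> length v \<le> length q"
  using root_Pq_subset Pq_word by blast

lemma root_Pq_code:
  assumes "set s \<subseteq> root_Pq q" "set t \<subseteq> root_Pq q" "concat s = concat t"
  shows "s = t"
  using assms
proof (induction s arbitrary: t)
  case Nil
  moreover have "[] \<notin> set t" using Nil.prems(2) by (auto simp: root_Pq_def Pq_def)
  ultimately show ?case by (cases t) auto
next
  case (Cons u s)
  have "u \<noteq> []" using Cons.prems(1) by (auto simp: root_Pq_def Pq_def)
  then obtain w t' where t: "t = w # t'" using Cons.prems by (cases t) auto
  have roots: "u \<in> root_Pq q" "w \<in> root_Pq q" using Cons.prems t by auto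
  then have P: "u \<in> Pq q" "w \<in> Pq q" using root_Pq_subset by auto
  have Y: "prefix q (concat s @ q)" and Z: "prefix q (concat t' @ q)"
    using Cons.prems t root_Pq_subset by (auto intro!: prefix_concat_Pq)
  have eq: "u @ concat s = w @ concat t'" using Cons.prems(3) t by simp
  have "length u = length w"
    using Pq_overlap_not_root[OF P _ eq Y Z] Pq_overlap_not_root[OF P(2,1) _ eq[symmetric] Z Y] roots
    by (meson linorder_neqE_nat)
  then have "u = w" "concat s = concat t'" using eq by auto
  then show ?case using Cons t by simp
qed

section \<open>Minimal covers and the Kraft identity\<close>

definition min_covers :: "'a list set \<Rightarrow> nat \<Rightarrow> 'a list list set" where
  "min_covers R n = {s. set s \<subseteq> R \<and> ((s = [] \<and> n = 0) \<or>
     (s \<noteq> [] \<and> n \<le> length (concat s) \<and> length (concat (butlast s)) < n))}"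

lemma min_covers_0: "min_covers R 0 = {[]}"
  by (auto simp: min_covers_def)

lemma min_covers_length_ge: "s \<in> min_covers R n \<Longrightarrow> n \<le> length (concat s)"
  by (auto simp: min_covers_def)

lemma min_covers_subset: "s \<in> min_covers R n \<Longrightarrow> set s \<subseteq> R"
  by (simp add: min_covers_def)

text \<open>A minimal cover overshoots n by at most the length of its last word.\<close>
lemma min_covers_length_le:
  assumes "s \<in> min_covers R n" and "\<forall>v\<in>R. length v \<le> L"
  shows "length (concat s) \<le> n + L"
proof (cases "s = []")
  case False
  then have "concat s = concat (butlast s) @ last s"
    by (metis append_butlast_last_id concat_append concat.simps append_Nil2)
  moreover have "last s \<in> R" using False assms(1) by (auto simp: min_covers_def)
  ultimately show ?thesis using assms False by (fastforce simp: min_covers_def)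
qed simp

lemma length_le_length_concat: "[] \<notin> set xs \<Longrightarrow> length xs \<le> length (concat xs)"
proof (induction xs)
  case (Cons a xs)
  then have "1 \<le> length a" by (cases a) auto
  then show ?case using Cons by simp
qed simp

lemma min_covers_finite:
  assumes "finite R" "[] \<notin> R" shows "finite (min_covers R n)"
proof -
  have "min_covers R n \<subseteq> {s. set s \<subseteq> R \<and> length s \<le> n}"
  proof
    fix s assume s: "s \<in> min_covers R n"
    have "[] \<notin> set (butlast s)"
      using s assms(2) by (auto simp: min_covers_def dest: in_set_butlastD)
    then have "length (butlast s) \<le> length (concat (butlast s))"
      by (rule length_le_length_concat)
    then show "s \<in> {s. set s \<subseteq> R \<and> length s \<le> n}"
      using s by (cases "s = []") (auto simp: min_covers_def)
  qed
  then show ?thesis using finite_lists_length_le[OF assms(1)] by (rule finite_subset)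
qed

lemma min_covers_Suc:
  assumes "[] \<notin> R" "n > 0"
  shows "min_covers R n = (\<Union>v\<in>R. Cons v ` min_covers R (n - length v))"
proof (intro equalityI subsetI)
  fix s assume s: "s \<in> min_covers R n"
  then obtain v s' where sv: "s = v # s'" using assms by (cases s) (auto simp: min_covers_def)
  then have "s' \<in> min_covers R (n - length v)" "v \<in> R"
    using s by (cases "s' = []"; auto simp: min_covers_def)+
  then show "s \<in> (\<Union>v\<in>R. Cons v ` min_covers R (n - length v))" using sv by blast
next
  fix s assume "s \<in> (\<Union>v\<in>R. Cons v ` min_covers R (n - length v))"
  then obtain v s' where "v \<in> R" "s' \<in> min_covers R (n - length v)" "s = v # s'"
    by blast
  then show "s \<in> min_covers R n"
    using assms by (cases "s' = []") (auto simp: min_covers_def)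
qed

lemma min_covers_weight:
  fixes mu :: real
  assumes fin: "finite R" and ne: "[] \<notin> R" and w: "(\<Sum>v\<in>R. mu ^ length v) = 1"
  shows "(\<Sum>s\<in>min_covers R n. mu ^ length (concat s)) = 1"
proof (induction n rule: less_induct)
  case (less n)
  show ?case
  proof (cases "n = 0")
    case True then show ?thesis by (simp add: min_covers_0)
  next
    case False
    have split: "min_covers R n = (\<Union>v\<in>R. Cons v ` min_covers R (n - length v))"
      using False by (simp add: min_covers_Suc[OF ne])
    have "(\<Sum>s\<in>min_covers R n. mu ^ length (concat s))
       = (\<Sum>v\<in>R. \<Sum>s\<in>Cons v ` min_covers R (n - length v). mu ^ length (concat s))"
      unfolding split by (subst sum.UNION_disjoint) (auto simp: fin min_covers_finite[OF fin ne])
    also have "\<dots> = (\<Sum>v\<in>R. mu ^ length v *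
                       (\<Sum>s\<in>min_covers R (n - length v). mu ^ length (concat s)))"
      by (subst sum.reindex) (auto simp: power_add sum_distrib_left)
    also have "\<dots> = (\<Sum>v\<in>R. mu ^ length v)"
    proof (rule sum.cong[OF refl])
      fix v assume "v \<in> R"
      then have "n - length v < n" using ne False by (cases v) auto
      then show "mu ^ length v * (\<Sum>s\<in>min_covers R (n - length v). mu ^ length (concat s))
                 = mu ^ length v" using less by simp
    qed
    finally show ?thesis using w by simp
  qed
qed

lemma card_min_covers_ge:
  fixes lam :: real
  assumes fin: "finite R" and ne: "[] \<notin> R" and "lam > 0"
    and w: "(\<Sum>v\<in>R. (1 / lam) ^ length v) = 1"
  shows "lam ^ n \<le> card (min_covers R n)"
proof -
  have weight: "(\<Sum>s\<in>min_covers R n. (1 / lam) ^ length (concat s)) = 1"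
    by (rule min_covers_weight[OF fin ne w])
  then have "min_covers R n \<noteq> {}" by auto
  then have card_pos: "1 \<le> card (min_covers R n)"
    using min_covers_finite[OF fin ne] by (simp add: Suc_le_eq card_gt_0_iff)
  show ?thesis
  proof (cases "lam \<ge> 1")
    case True
    have "(\<Sum>s\<in>min_covers R n. (1 / lam) ^ length (concat s))
          \<le> (\<Sum>s\<in>min_covers R n. (1 / lam) ^ n)"
      using True \<open>lam > 0\<close> by (intro sum_mono power_decreasing min_covers_length_ge) auto
    then have "1 \<le> card (min_covers R n) / lam ^ n"
      using weight by (simp add: power_one_over)
    then show ?thesis using \<open>lam > 0\<close> by (simp add: le_divide_eq)
  next
    case False
    then have "lam ^ n \<le> 1" using \<open>lam > 0\<close> by (simp add: power_le_one)
    then show ?thesis using card_pos by linarith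
  qed
qed

lemma char_poly_root_kraft:
  fixes lam :: real
  assumes "lam > 0" and "char_poly_q q lam = 0"
  shows "(\<Sum>v\<in>root_Pq q. (1 / lam) ^ length v) = 1"
proof -
  have short: "length v \<le> length q" if "v \<in> root_Pq q" for v
    using root_Pq_word[OF that] by blast
  have "(\<Sum>v\<in>root_Pq q. (1 / lam) ^ length v)
      = (\<Sum>v\<in>root_Pq q. lam ^ (length q - length v)) / lam ^ length q"
    unfolding sum_divide_distrib using \<open>lam > 0\<close>
    by (intro sum.cong refl) (simp add: short power_diff power_one_over)
  also have "\<dots> = lam ^ length q / lam ^ length q"
    using assms(2) by (simp add: char_poly_q_def)
  also have "\<dots> = 1" using \<open>lam > 0\<close> by simp
  finally show ?thesis .
qed

lemma root_Pq_min_covers_inj: "inj_on concat (min_covers (root_Pq q) n)"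
  by (intro inj_onI root_Pq_code) (auto simp: min_covers_def)

section \<open>Infinite concatenation and factors\<close>

text \<open>The omega-word F 0 F 1 F 2 ... for a sequence of nonempty lists.\<close>
definition inf_concat :: "(nat \<Rightarrow> 'b list) \<Rightarrow> nat \<Rightarrow> 'b" where
  "inf_concat F i = concat (map F [0..<Suc i]) ! i"

text \<open>Since all blocks are nonempty, the first k blocks have at least k letters;
  so position i is determined once i+1 blocks are concatenated.\<close>
lemma length_concat_upt_ge: "\<forall>i. F i \<noteq> [] \<Longrightarrow> k \<le> length (concat (map F [0..<k]))"
proof (induction k)
  case (Suc k)
  then have "1 \<le> length (F k)" by (cases "F k") auto
  then show ?case using Suc by simp
qed simp

lemma concat_upt_split:
  "a \<le> b \<Longrightarrow> concat (map F [0..<b]) = concat (map F [0..<a]) @ concat (map F [a..<b])"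
  using upt_add_eq_append[of 0 a "b - a"] by simp

lemma inf_concat_nth:
  assumes "\<forall>i. F i \<noteq> []" "i < length (concat (map F [0..<k]))"
  shows "inf_concat F i = concat (map F [0..<k]) ! i"
proof (cases "k \<le> Suc i")
  case True
  then show ?thesis
    unfolding inf_concat_def concat_upt_split[OF True, of F] using assms(2) by (simp add: nth_append)
next
  case False
  have "i < length (concat (map F [0..<Suc i]))"
    using length_concat_upt_ge[OF assms(1), of "Suc i"] by simp
  moreover have "concat (map F [0..<k]) = concat (map F [0..<Suc i]) @ concat (map F [Suc i..<k])"
    using False by (intro concat_upt_split) simp
  ultimately show ?thesis unfolding inf_concat_def by (simp only: nth_append) simp
qed

lemma inf_concat_in_omega_lang:
  assumes "\<forall>i. F i \<in> L - {[]}" shows "inf_concat F \<in> omega_lang L"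
  unfolding omega_lang_def oprefix_def using assms inf_concat_nth[of F] by (auto intro!: exI[of _ F])

lemma inf_concat_block_factor:
  assumes "\<forall>i. F i \<noteq> []"
  shows "concat (map F [b..<e]) \<in> factors (inf_concat F) (length (concat (map F [b..<e])))"
proof (cases "b \<le> e")
  case True
  define B where "B = length (concat (map F [0..<b]))"
  define C where "C = concat (map F [b..<e])"
  have E: "concat (map F [0..<e]) = concat (map F [0..<b]) @ C"
    using concat_upt_split[OF True] by (simp add: C_def)
  have "inf_concat F (B + i) = C ! i" if "i < length C" for i
    using inf_concat_nth[OF assms, of "B + i" e] that E by (simp add: B_def nth_append)
  then have "C = map (inf_concat F) [B..<B + length C]"
    by (intro nth_equalityI) auto
  then have "C \<in> factors (inf_concat F) (length C)"
    unfolding factors_def by blast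
  then show ?thesis by (simp add: C_def)
next
  case False
  then show ?thesis by (auto simp: factors_def)
qed

lemma inf_concat_in:
  assumes "\<forall>i. F i \<noteq> []" "\<forall>j. set (F j) \<subseteq> A" shows "inf_concat F i \<in> A"
proof -
  have "i < length (concat (map F [0..<Suc i]))"
    using length_concat_upt_ge[OF assms(1), of "Suc i"] by simp
  then have "inf_concat F i \<in> set (concat (map F [0..<Suc i]))"
    unfolding inf_concat_def by (rule nth_mem)
  then show ?thesis using assms(2) by auto
qed

lemma factors_sublist:
  assumes "w \<in> factors \<xi> (length w)" and "sublist v w"
  shows "v \<in> factors \<xi> (length v)"
proof -
  obtain i where w: "w = map \<xi> [i..<i + length w]" using assms(1) by (auto simp: factors_def)
  obtain p r where pr: "w = p @ v @ r" using assms(2) by (auto simp: sublist_def)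
  have "v = take (length v) (drop (length p) w)" using pr by simp
  also have "\<dots> = map \<xi> [i + length p..<i + length p + length v]"
    by (subst w) (use pr in \<open>simp add: drop_map take_map\<close>)
  finally show ?thesis unfolding factors_def by blast
qed

lemma factors_iff: "w \<in> factors \<xi> n \<longleftrightarrow> (\<exists>i. map \<xi> [i..<i + n] = w)"
  by (auto simp: factors_def)

lemma finite_words_bounded: "finite {z :: 'a::finite list. length z \<le> L}"
  using finite_lists_length_le[OF finite_UNIV, of L] by simp

lemma finite_factors: "finite (factors (\<xi> :: nat \<Rightarrow> 'a::finite) n)"
  by (rule finite_subset[OF _ finite_lists_length_le[of UNIV n]]) (auto simp: factors_def)

section \<open>An omega-word containing prescribed factors\<close>

text \<open>Given a nonempty word u of L and, for every m, finitely many lists of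
  nonempty L-words, some element of L^omega contains every concatenation
  of such a list as a factor: concatenate u, then all lists of the m-th family,
  for m = 0, 1, 2, ...\<close>
lemma omega_lang_containing:
  fixes S :: "nat \<Rightarrow> 'a list list set"
  assumes u: "u \<in> L" "u \<noteq> []"
    and fin: "\<And>m. finite (S m)" and words: "\<And>m s. s \<in> S m \<Longrightarrow> set s \<subseteq> L - {[]}"
  shows "\<exists>\<xi>\<in>omega_lang L. \<forall>m. \<forall>s\<in>S m. concat s \<in> factors \<xi> (length (concat s))"
proof -
  obtain ls where ls: "\<And>m. set (ls m) = S m"
    using finite_list[OF fin] by metis
  define F where "F m = u # concat (ls m)" for m :: nat
  define ws where "ws = inf_concat F"
  have F_ne: "\<forall>i. F i \<noteq> []" by (simp add: F_def)
  have F_L: "\<forall>m. set (F m) \<subseteq> L - {[]}"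
  proof (intro allI subsetI)
    fix m x assume "x \<in> set (F m)"
    then have "x = u \<or> (\<exists>s\<in>set (ls m). x \<in> set s)"
      unfolding F_def by simp
    then show "x \<in> L - {[]}" using u words[of _ m] unfolding ls by blast
  qed
  have ws_L: "\<forall>i. ws i \<in> L - {[]}"
    unfolding ws_def using inf_concat_in[OF F_ne F_L] by blast
  then have ws_ne: "\<forall>i. ws i \<noteq> []" by blast
  have "concat s \<in> factors (inf_concat ws) (length (concat s))" if s_in: "s \<in> S m" for m s
  proof -
    have F_factor: "F m \<in> factors ws (length (F m))"
      using inf_concat_block_factor[OF F_ne, of m "Suc m"] by (simp add: ws_def)
    obtain ys zs where "ls m = ys @ s # zs"
      using split_list[of s "ls m"] s_in unfolding ls by blast
    then have "sublist s (F m)"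
      unfolding sublist_def F_def by (intro exI[of _ "u # concat ys"] exI[of _ "concat zs"]) simp
    then obtain b where s: "map ws [b..<b + length s] = s"
      using factors_sublist[OF F_factor] unfolding factors_iff by blast
    show ?thesis
      using inf_concat_block_factor[OF ws_ne, of b "b + length s"] unfolding s .
  qed
  then show ?thesis using inf_concat_in_omega_lang[OF ws_L] by blast
qed

section \<open>The lower bound on the factor complexity\<close>

text \<open>If R is a code of words of length at most L and the omega-word xi contains
  all minimal covers of n, then xi has many factors of length n: a cover is
  determined by its first n letters (a factor) and its at most L remaining ones.\<close>
lemma card_min_covers_le_fcompl:
  fixes \<xi> :: "nat \<Rightarrow> 'a::finite"
  assumes code: "inj_on concat (min_covers R n)" and short: "\<forall>v\<in>R. length v \<le> L"
    and contains: "\<forall>s\<in>min_covers R n. concat s \<in> factors \<xi> (length (concat s))"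
  shows "card (min_covers R n) \<le> fcompl \<xi> n * card {z :: 'a list. length z \<le> L}"
proof -
  define Z where "Z = {z :: 'a list. length z \<le> L}"
  have "finite Z" unfolding Z_def by (rule finite_words_bounded)
  let ?split = "\<lambda>s. (take n (concat s), drop n (concat s))"
  have "inj_on ?split (min_covers R n)"
    using code by (auto simp: inj_on_def) (metis append_take_drop_id)
  moreover have "?split ` min_covers R n \<subseteq> factors \<xi> n \<times> Z"
  proof safe
    fix s assume s: "s \<in> min_covers R n"
    then have "n \<le> length (concat s)" by (rule min_covers_length_ge)
    then show "take n (concat s) \<in> factors \<xi> n"
      using factors_sublist[OF bspec[OF contains s], of "take n (concat s)"] by simp
    show "drop n (concat s) \<in> Z"
      using min_covers_length_le[OF s short] by (simp add: Z_def)
  qed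
  ultimately have "card (min_covers R n) \<le> card (factors \<xi> n \<times> Z)"
    using finite_cartesian_product[OF finite_factors \<open>finite Z\<close>] by (intro card_inj_on_le)
  then show ?thesis by (simp add: fcompl_def Z_def card_cartesian_product)
qed

theorem lemma7:
  fixes q :: "'a::finite list" and lam :: real
  assumes "card (UNIV :: 'a set) \<ge> 2"
    and "q \<noteq> []"
    and "lam > 0" and "char_poly_q q lam = 0"
    and "\<forall>t>0. char_poly_q q t = 0 \<longrightarrow> t \<le> lam"
  shows "\<exists>c>0. \<exists>\<xi>\<in>omega_lang (Pq q). \<forall>n. real (fcompl \<xi> n) \<ge> c * lam ^ n"
proof -
  have R_ne: "[] \<notin> root_Pq q" and R_short: "\<forall>v\<in>root_Pq q. length v \<le> length q"
    using root_Pq_word by blast+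
  note R_fin = root_Pq_finite[of q]
  have q_Pq: "q \<in> Pq q" using \<open>q \<noteq> []\<close> by (auto simp: Pq_def strict_prefix_def)
  have covers_Pq: "set s \<subseteq> Pq q - {[]}" if "s \<in> min_covers (root_Pq q) n" for n s
    using min_covers_subset[OF that] root_Pq_subset R_ne by blast
  obtain \<xi> where \<xi>: "\<xi> \<in> omega_lang (Pq q)"
    and contains: "\<forall>n. \<forall>s\<in>min_covers (root_Pq q) n. concat s \<in> factors \<xi> (length (concat s))"
    using omega_lang_containing[where S = "min_covers (root_Pq q)", OF q_Pq \<open>q \<noteq> []\<close>
        min_covers_finite[OF R_fin R_ne]] covers_Pq
    by blast
  define Z where "Z = card {z :: 'a list. length z \<le> length q}"
  have "Z > 0"
    unfolding Z_def using finite_words_bounded[of "length q"]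
    by (auto simp: card_gt_0_iff intro!: exI[of _ "[]"])
  have "lam ^ n \<le> real (fcompl \<xi> n) * Z" for n
  proof -
    have "lam ^ n \<le> card (min_covers (root_Pq q) n)"
      using card_min_covers_ge[OF R_fin R_ne \<open>lam > 0\<close> char_poly_root_kraft[OF assms(3,4)]] .
    also have "\<dots> \<le> real (fcompl \<xi> n * Z)"
      unfolding Z_def of_nat_le_iff using contains
      by (intro card_min_covers_le_fcompl[OF root_Pq_min_covers_inj R_short]) blast
    finally show ?thesis by simp
  qed
  then show ?thesis
    using \<xi> \<open>Z > 0\<close> by (intro exI[of _ "1 / Z"] conjI bexI[of _ \<xi>] allI) (auto simp: field_simps)
qed

end
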